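(* Let $U$ be a nonempty finite set, $R$ a relation on $U$, and $M(R)$ the relation matroid induced by $R$. Then $cl_{M(R)}(X)=H_R(X)$ for all $X\subseteq U$ if and only if $R$ is an equivalence relation (reflexive, symmetric and transitive).
   Context: For $x\in U$, $RS_R(x)=\{y\in U:(x,y)\in R\}$. $\mathbf{I}(R)=\{X\subseteq U: \forall x,y\in X,\ x\neq y \Rightarrow RS_R(x)\neq RS_R(y)\}$; this is the family of independent sets of a matroid $M(R)=(U,\mathbf{I}(R))$, called the relation matroid induced by $R$. For a matroid $M$ with rank function $r_M(X)=\max\{|I|:I\subseteq X, I \text{ independent}\}$, the closure operator is $cl_M(X)=\{u\in U: r_M(X\cup\{u\})=r_M(X)\}$. The upper approximation operator of $R$ is $H_R(X)=\{x\in U: RS_R(x)\cap X\neq\emptyset\}$ for $X\subseteq U$. *)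

theory Defs
  imports Main
begin

definition RS :: "('a \<times> 'a) set \<Rightarrow> 'a \<Rightarrow> 'a set" where
  "RS R x = {y. (x, y) \<in> R}"

definition rel_indep :: "'a set \<Rightarrow> ('a \<times> 'a) set \<Rightarrow> 'a set set" where
  "rel_indep U R = {X. X \<subseteq> U \<and> (\<forall>x\<in>X. \<forall>y\<in>X. x \<noteq> y \<longrightarrow> RS R x \<noteq> RS R y)}"

definition mat_rank :: "'a set set \<Rightarrow> 'a set \<Rightarrow> nat" where
  "mat_rank I X = Max {card Y | Y. Y \<subseteq> X \<and> Y \<in> I}"

definition mat_cl :: "'a set \<Rightarrow> 'a set set \<Rightarrow> 'a set \<Rightarrow> 'a set" where
  "mat_cl U I X = {u \<in> U. mat_rank I (X \<union> {u}) = mat_rank I X}"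

definition upper_approx :: "'a set \<Rightarrow> ('a \<times> 'a) set \<Rightarrow> 'a set \<Rightarrow> 'a set" where
  "upper_approx U R X = {x \<in> U. RS R x \<inter> X \<noteq> {}}"

end

theory Submission
  imports Defs
begin

(* The relation matroid M(R) on U identifies points with equal successor sets
   RS R x: a set is independent iff RS R is injective on it.  Hence the rank of
   a set X is the number of distinct successor sets occurring in X, and u lies
   in the closure of X iff RS R u already occurs among the successor sets of X.
   Comparing this with the upper approximation H_R(X) = {u. RS R u meets X}
   (tested on singletons for one direction) shows that cl = H_R holds iff
       (x, y) \<in> R  \<longleftrightarrow>  RS R x = RS R y   for all x, y \<in> U,
   and for a relation on U this condition is a characterisation of equivalence
   relations. *)

lemma rel_indep_iff_inj_on:
  "Y \<in> rel_indep U R \<longleftrightarrow> Y \<subseteq> U \<and> inj_on (RS R) Y"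
  unfolding rel_indep_def inj_on_def by blast

text \<open>The rank of a finite set counts its distinct successor sets: a maximal
  independent subset picks one representative of each successor set.\<close>
lemma rel_rank_eq_card_RS:
  assumes "finite X" "X \<subseteq> U"
  shows "mat_rank (rel_indep U R) X = card (RS R ` X)"
  unfolding mat_rank_def
proof (rule Max_eqI)
  have "{card Y | Y. Y \<subseteq> X \<and> Y \<in> rel_indep U R} \<subseteq> card ` Pow X" by auto
  then show "finite {card Y | Y. Y \<subseteq> X \<and> Y \<in> rel_indep U R}"
    using assms(1) finite_subset by blast
next
  fix c assume "c \<in> {card Y | Y. Y \<subseteq> X \<and> Y \<in> rel_indep U R}"
  then obtain Y where Y: "c = card Y" "Y \<subseteq> X" "inj_on (RS R) Y"
    by (auto simp: rel_indep_iff_inj_on)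
  have "card Y = card (RS R ` Y)" using Y(3) by (simp add: card_image)
  also have "\<dots> \<le> card (RS R ` X)" using Y(2) assms(1) by (intro card_mono) auto
  finally show "c \<le> card (RS R ` X)" using Y(1) by simp
next
  have "\<exists>Y. Y \<subseteq> X \<and> inj_on (RS R) Y \<and> RS R ` X = RS R ` Y"
    by (rule subset_image_inj[THEN iffD1]) (rule subset_refl)
  then obtain Y where Y: "Y \<subseteq> X" "inj_on (RS R) Y" "RS R ` X = RS R ` Y"
    by blast
  have "Y \<in> rel_indep U R" using Y(1,2) assms(2) by (simp add: rel_indep_iff_inj_on)
  moreover have "card (RS R ` X) = card Y" unfolding Y(3) using Y(2) by (rule card_image)
  ultimately show "card (RS R ` X) \<in> {card Y | Y. Y \<subseteq> X \<and> Y \<in> rel_indep U R}"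
    using Y(1) by blast
qed

lemma rel_cl_eq:
  assumes "finite U" "X \<subseteq> U"
  shows "mat_cl U (rel_indep U R) X = {u \<in> U. RS R u \<in> RS R ` X}"
proof -
  have fin: "finite X" using assms finite_subset by blast
  have "mat_rank (rel_indep U R) (insert u X) = mat_rank (rel_indep U R) X
          \<longleftrightarrow> RS R u \<in> RS R ` X" if "u \<in> U" for u
    using that assms fin rel_rank_eq_card_RS[of "insert u X" U R] rel_rank_eq_card_RS[of X U R]
    by (simp add: card_insert_if)
  then show ?thesis unfolding mat_cl_def by auto
qed

text \<open>The closure of M(R) is the upper approximation of R exactly when R relates
  precisely the points of U with equal successor sets.  One direction only needs
  singleton sets X = {y}.\<close>
lemma rel_cl_eq_upper_approx_iff:
  assumes "finite U"
  shows "(\<forall>X. X \<subseteq> U \<longrightarrow> mat_cl U (rel_indep U R) X = upper_approx U R X)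
         \<longleftrightarrow> (\<forall>x\<in>U. \<forall>y\<in>U. (x, y) \<in> R \<longleftrightarrow> RS R x = RS R y)"
proof
  assume cl_H: "\<forall>X. X \<subseteq> U \<longrightarrow> mat_cl U (rel_indep U R) X = upper_approx U R X"
  show "\<forall>x\<in>U. \<forall>y\<in>U. (x, y) \<in> R \<longleftrightarrow> RS R x = RS R y"
  proof (intro ballI)
    fix x y assume xy: "x \<in> U" "y \<in> U"
    have "mat_cl U (rel_indep U R) {y} = upper_approx U R {y}" using cl_H xy by simp
    then have "{u \<in> U. RS R u = RS R y} = {u \<in> U. y \<in> RS R u}"
      using xy by (simp add: rel_cl_eq[OF assms] upper_approx_def)
    then have "RS R x = RS R y \<longleftrightarrow> y \<in> RS R x" using xy by blast
    then show "(x, y) \<in> R \<longleftrightarrow> RS R x = RS R y" by (simp add: RS_def)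
  qed
next
  assume R_RS: "\<forall>x\<in>U. \<forall>y\<in>U. (x, y) \<in> R \<longleftrightarrow> RS R x = RS R y"
  show "\<forall>X. X \<subseteq> U \<longrightarrow> mat_cl U (rel_indep U R) X = upper_approx U R X"
  proof (intro allI impI)
    fix X assume X: "X \<subseteq> U"
    have "RS R u \<in> RS R ` X \<longleftrightarrow> RS R u \<inter> X \<noteq> {}" if "u \<in> U" for u
    proof -
      have "RS R u \<in> RS R ` X \<longleftrightarrow> (\<exists>x\<in>X. RS R u = RS R x)" by blast
      also have "\<dots> \<longleftrightarrow> (\<exists>x\<in>X. (u, x) \<in> R)" using R_RS X \<open>u \<in> U\<close> by blast
      also have "\<dots> \<longleftrightarrow> RS R u \<inter> X \<noteq> {}" by (auto simp: RS_def)
      finally show ?thesis .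
    qed
    then show "mat_cl U (rel_indep U R) X = upper_approx U R X"
      by (auto simp: rel_cl_eq[OF assms X] upper_approx_def)
  qed
qed

lemma equiv_iff_RS_eq:
  assumes "R \<subseteq> U \<times> U"
  shows "equiv U R \<longleftrightarrow> (\<forall>x\<in>U. \<forall>y\<in>U. (x, y) \<in> R \<longleftrightarrow> RS R x = RS R y)"
proof
  assume "equiv U R"
  moreover have "RS R z = R `` {z}" for z by (auto simp: RS_def)
  ultimately show "\<forall>x\<in>U. \<forall>y\<in>U. (x, y) \<in> R \<longleftrightarrow> RS R x = RS R y"
    using equiv_class_eq_iff by fastforce
next
  assume R_RS: "\<forall>x\<in>U. \<forall>y\<in>U. (x, y) \<in> R \<longleftrightarrow> RS R x = RS R y"
  then have refl: "(x, x) \<in> R" if "x \<in> U" for x using that by blast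
  have RS_eq: "RS R x = RS R y" if "(x, y) \<in> R" for x y
    using R_RS assms that by blast
  show "equiv U R"
  proof (rule equivI)
    show "R \<subseteq> U \<times> U" using assms .
    show "refl_on U R" using refl assms by (auto simp: refl_on_def)
    show "sym R"
    proof (rule symI)
      fix x y assume xy: "(x, y) \<in> R"
      then have "x \<in> RS R x" using refl assms by (auto simp: RS_def)
      then show "(y, x) \<in> R" using RS_eq[OF xy] by (auto simp: RS_def)
    qed
    show "trans R"
    proof (rule transI)
      fix x y z assume "(x, y) \<in> R" "(y, z) \<in> R"
      then show "(x, z) \<in> R" using RS_eq[of x y] by (auto simp: RS_def)
    qed
  qed
qed

theorem mainTheorem11:
  fixes U :: "'a set" and R :: "('a \<times> 'a) set"
  assumes "finite U" and "U \<noteq> {}" and "R \<subseteq> U \<times> U"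
  shows "(\<forall>X. X \<subseteq> U \<longrightarrow> mat_cl U (rel_indep U R) X = upper_approx U R X)
         \<longleftrightarrow> equiv U R"
  using rel_cl_eq_upper_approx_iff[OF assms(1)] equiv_iff_RS_eq[OF assms(3)] by simp

end
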